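(* Let $\kappa\ge3$ and let $X_t$ be the walk with wall defined below. Define $P_*^{(E)}(x)=\lim_{t\to\infty}P(X_{2t}=x)$ and $P_*^{(O)}(x)=\lim_{t\to\infty}P(X_{2t+1}=x)$ for $x\in\mathbb{Z}_+$. Then these limits exist and: (1) (Case (A), $\gamma=0$) $P_*^{(E)}(x)=P_*^{(O)}(x)=0$ for all $x\ge0$. (2) (Case (B), $\gamma=\pi$) For even $x$: $P_*^{(E)}(x)=\left(\frac{\kappa-2}{\kappa-1}\right)^2\left\{\delta_0(x)+(1-\delta_0(x))\,\kappa\left(\frac{1}{\kappa-1}\right)^x\right\}$, and $P_*^{(E)}(x)=0$ for odd $x$; for odd $x$: $P_*^{(O)}(x)=\kappa\left(\frac{\kappa-2}{\kappa-1}\right)^2\left(\frac{1}{\kappa-1}\right)^x$, and $P_*^{(O)}(x)=0$ for even $x$. Here $\delta_0(x)=1$ if $x=0$ and $0$ otherwise.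
   Context: Walk with wall on $\mathbb{Z}_+=\{0,1,2,\dots\}$: fix $\kappa\ge3$, let $a_\kappa=2\sqrt{\kappa-1}/\kappa$, $b_\kappa=1-2/\kappa$, $\gamma\in\mathbb{R}$. Consider the Hilbert space with orthonormal basis $\{|0,L\rangle\}\cup\{|x,L\rangle,|x,R\rangle: x\ge1\}$ and the unitary $\widetilde U$ given by $\widetilde U|0,L\rangle=e^{i\gamma}|1,R\rangle$ and, for $x\ge1$, $\widetilde U|x,L\rangle=a_\kappa|x-1,L\rangle+b_\kappa|x+1,R\rangle$, $\widetilde U|x,R\rangle=-b_\kappa|x-1,L\rangle+a_\kappa|x+1,R\rangle$. With $\Phi_t=\widetilde U^t|0,L\rangle$, the random variable $X_t$ on $\mathbb{Z}_+$ has $P(X_t=0)=|\langle 0,L|\Phi_t\rangle|^2$ and $P(X_t=x)=|\langle x,L|\Phi_t\rangle|^2+|\langle x,R|\Phi_t\rangle|^2$ for $x\ge1$. Case (A) is $\gamma=0$ and Case (B) is $\gamma=\pi$. (These correspond to the distance from the root of the Grover walk on the $\kappa$-regular Cayley tree started at the root with uniform coin state $(1/\sqrt\kappa,\dots,1/\sqrt\kappa)$, resp. coin state $(\omega_\kappa^j/\sqrt\kappa)_{j=0}^{\kappa-1}$, $\omega_\kappa=e^{2\pi i/\kappa}$.) *)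

theory Defs
  imports Complex_Main
begin

datatype chir = L | R

definition a_k :: "nat \<Rightarrow> real" where
  "a_k \<kappa> = 2 * sqrt (real \<kappa> - 1) / real \<kappa>"

definition b_k :: "nat \<Rightarrow> real" where
  "b_k \<kappa> = 1 - 2 / real \<kappa>"

text \<open>A state is given by its coordinates psi x c = <x,c|psi>; the coordinate (0,R)
  is not a basis vector and is kept equal to 0. The unitary U~ acts on coordinates:
  U|0,L> = e^{i gamma}|1,R>, U|x,L> = a|x-1,L> + b|x+1,R>, U|x,R> = -b|x-1,L> + a|x+1,R> (x>=1).\<close>
definition wstep :: "real \<Rightarrow> nat \<Rightarrow> (nat \<Rightarrow> chir \<Rightarrow> complex) \<Rightarrow> (nat \<Rightarrow> chir \<Rightarrow> complex)" where
  "wstep \<gamma> \<kappa> \<psi> = (\<lambda>x c. case c of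
      L \<Rightarrow> complex_of_real (a_k \<kappa>) * \<psi> (Suc x) L - complex_of_real (b_k \<kappa>) * \<psi> (Suc x) R
    | R \<Rightarrow> (if x = 0 then 0
            else if x = 1 then cis \<gamma> * \<psi> 0 L
            else complex_of_real (b_k \<kappa>) * \<psi> (x - 1) L + complex_of_real (a_k \<kappa>) * \<psi> (x - 1) R))"

definition Phi :: "real \<Rightarrow> nat \<Rightarrow> nat \<Rightarrow> (nat \<Rightarrow> chir \<Rightarrow> complex)" where
  "Phi \<gamma> \<kappa> t = (wstep \<gamma> \<kappa> ^^ t) (\<lambda>x c. if x = 0 \<and> c = L then 1 else 0)"

definition Pw :: "real \<Rightarrow> nat \<Rightarrow> nat \<Rightarrow> nat \<Rightarrow> real" where
  "Pw \<gamma> \<kappa> t x = (if x = 0 then (cmod (Phi \<gamma> \<kappa> t 0 L))\<^sup>2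
                   else (cmod (Phi \<gamma> \<kappa> t x L))\<^sup>2 + (cmod (Phi \<gamma> \<kappa> t x R))\<^sup>2)"

end

theory Submission
  imports Defs "HOL-Computational_Algebra.Formal_Power_Series"
begin

(* All amplitudes of the walk are coefficients of formal power series in the
   time variable X.  Away from the wall the walk is translation invariant, so the generating
   functions at a site x \<ge> 1 have the form G * zeta^(x-1), where zeta is the power-series root
   of  a X zeta^2 - (1 + X^2) zeta + a X = 0.  The discriminant
   D = sqrt((1 + X^2)^2 - 4 a^2 X^2) factors as sqrt(1 - w X^2) sqrt(1 - cnj w X^2) with
   w = (a + i b)^2 on the unit circle; the coefficients of these square roots are absolutely
   summable, and those of the product sum to |1 - w| = 2b. *)

unbundle fps_syntax

section \<open>The square-root series sqrt(1 - w X)\<close>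

text \<open>Coefficients of sqrt(1 - X): all but the first are non-positive and their partial sums
  stay non-negative, which makes the series absolutely summable at |X| = 1.\<close>
definition sqrt_coeff :: "nat \<Rightarrow> real" where
  "sqrt_coeff n = ((1/2::real) gchoose n) * (-1)^n"

lemma sqrt_coeff_0: "sqrt_coeff 0 = 1"
  by (simp add: sqrt_coeff_def)

lemma sqrt_coeff_partial_sum: "(\<Sum>k\<le>m. sqrt_coeff k) = pochhammer (1/2) m / fact m"
proof -
  have "(\<Sum>k\<le>m. sqrt_coeff k) = (- 1) ^ m * ((1/2::real) - 1 gchoose m)"
    unfolding sqrt_coeff_def by (rule gbinomial_sum_lower_neg)
  also have "\<dots> = pochhammer (1/2) m / fact m"
    by (simp add: gbinomial_pochhammer)
  finally show ?thesis .
qed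

lemma sqrt_coeff_nonpos: assumes "k > 0" shows "sqrt_coeff k \<le> 0"
proof -
  obtain j where k: "k = Suc j" using assms by (cases k) auto
  have "sqrt_coeff k = pochhammer (-1/2) k / fact k"
    unfolding sqrt_coeff_def by (simp add: gbinomial_pochhammer)
  also have "\<dots> = - (1/2) * pochhammer (1/2) j / fact k"
    unfolding k pochhammer_rec by simp
  also have "\<dots> \<le> 0"
    by (intro divide_nonpos_pos mult_nonpos_nonneg pochhammer_nonneg) auto
  finally show ?thesis .
qed

lemma summable_abs_sqrt_coeff: "summable (\<lambda>n. \<bar>sqrt_coeff n\<bar>)"
proof (rule summableI_nonneg_bounded[where x=2])
  fix n
  have "(\<Sum>k\<le>n. \<bar>sqrt_coeff k\<bar>) = 2 * sqrt_coeff 0 - (\<Sum>k\<le>n. sqrt_coeff k)"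
  proof (induction n)
    case (Suc n) then show ?case using sqrt_coeff_nonpos[of "Suc n"] by simp
  qed (simp add: sqrt_coeff_0)
  moreover have "(\<Sum>k\<le>n. sqrt_coeff k) \<ge> 0"
    unfolding sqrt_coeff_partial_sum by (intro divide_nonneg_pos pochhammer_nonneg) auto
  moreover have "(\<Sum>k<n. \<bar>sqrt_coeff k\<bar>) \<le> (\<Sum>k\<le>n. \<bar>sqrt_coeff k\<bar>)"
    by (intro sum_mono2) auto
  ultimately show "(\<Sum>k<n. \<bar>sqrt_coeff k\<bar>) \<le> 2" by (simp add: sqrt_coeff_0)
qed auto

lemma gchoose_half_complex: "((1/2::complex) gchoose n) = of_real ((1/2::real) gchoose n)"
proof -
  have "((1/2::complex) gchoose n) = (- 1) ^ n * pochhammer (- of_real (1/2)) n / fact n"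
    by (simp add: gbinomial_pochhammer)
  also have "\<dots> = of_real ((- 1) ^ n * pochhammer (- (1/2)) n / fact n)"
    by (simp only: of_real_minus[symmetric] pochhammer_of_real) simp
  also have "(- 1) ^ n * pochhammer (- (1/2)) n / fact n = ((1/2::real) gchoose n)"
    by (simp add: gbinomial_pochhammer)
  finally show ?thesis .
qed

definition sqrt_fps :: "complex \<Rightarrow> complex fps" where
  "sqrt_fps w = fps_binomial (1/2) oo (fps_const (-w) * fps_X)"

lemma sqrt_fps_nth: "sqrt_fps w $ n = of_real (sqrt_coeff n) * w ^ n"
proof -
  have "sqrt_fps w $ n = (-w) ^ n * of_real ((1/2::real) gchoose n)"
    unfolding sqrt_fps_def fps_nth_compose_linear fps_binomial_nth gchoose_half_complex ..
  then show ?thesis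
    unfolding sqrt_coeff_def power_minus[of w] by (simp add: mult_ac)
qed

lemma sqrt_fps_square: "sqrt_fps w ^ 2 = 1 - fps_const w * fps_X"
proof -
  have "sqrt_fps w ^ 2 = fps_binomial (1/2) ^ 2 oo (fps_const (-w) * fps_X)"
    unfolding sqrt_fps_def by (rule fps_compose_power) simp
  also have "fps_binomial (1/2::complex) ^ 2 = 1 + fps_X"
    by (simp add: fps_binomial_power fps_binomial_1)
  also have "(1 + fps_X) oo (fps_const (-w) * fps_X) = 1 + fps_const (-w) * fps_X"
    by (simp add: fps_compose_add_distrib)
  finally show ?thesis
    by (simp add: fps_const_neg[symmetric] del: fps_const_neg)
qed

lemma summable_sqrt_fps: "norm w = 1 \<Longrightarrow> summable (\<lambda>n. norm (sqrt_fps w $ n))"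
  using summable_abs_sqrt_coeff by (simp add: sqrt_fps_nth norm_mult norm_power)

lemma sqrt_fps_sum_square:
  assumes "norm w = 1" shows "(\<Sum>n. sqrt_fps w $ n) ^ 2 = 1 - w"
proof -
  have "(\<lambda>k. \<Sum>i\<le>k. sqrt_fps w $ i * sqrt_fps w $ (k - i))
          sums ((\<Sum>n. sqrt_fps w $ n) * (\<Sum>n. sqrt_fps w $ n))"
    by (rule Cauchy_product_sums) (use summable_sqrt_fps[OF assms] in auto)
  moreover have "(\<lambda>k. \<Sum>i\<le>k. sqrt_fps w $ i * sqrt_fps w $ (k - i)) = (\<lambda>k. (sqrt_fps w ^ 2) $ k)"
    by (auto simp: power2_eq_square fps_mult_nth atLeast0AtMost)
  ultimately have "(\<lambda>k. (sqrt_fps w ^ 2) $ k) sums ((\<Sum>n. sqrt_fps w $ n) ^ 2)"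
    by (simp only: power2_eq_square)
  then have "(\<lambda>k. (1 - fps_const w * fps_X) $ k) sums ((\<Sum>n. sqrt_fps w $ n) ^ 2)"
    by (simp only: sqrt_fps_square)
  moreover have "(\<lambda>k. (1 - fps_const w * fps_X) $ k) sums (\<Sum>k\<in>{0,1}. (1 - fps_const w * fps_X) $ k)"
    by (rule sums_finite) auto
  ultimately show ?thesis using sums_unique2 by fastforce
qed

definition root_prod :: "complex \<Rightarrow> complex fps" where
  "root_prod w = sqrt_fps w * sqrt_fps (cnj w)"

definition disc_fps :: "complex \<Rightarrow> complex fps" where
  "disc_fps w = root_prod w oo fps_X ^ 2"

lemma fps_compose_X2_nth:
  "(f oo fps_X ^ 2) $ n = (if even n then f $ (n div 2) else (0::'a::comm_ring_1))"
proof -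
  have "(f oo fps_X ^ 2) $ n = (\<Sum>i=0..n. (if i = n div 2 \<and> even n then f $ i else 0))"
    unfolding fps_compose_nth
  proof (rule sum.cong[OF refl])
    fix i
    have "(fps_X ^ 2) ^ i = (fps_X ^ (2 * i) :: 'a fps)" by (simp add: power_mult)
    moreover have "(n = 2 * i) = (i = n div 2 \<and> even n)" by auto
    ultimately show "f $ i * (fps_X ^ 2) ^ i $ n = (if i = n div 2 \<and> even n then f $ i else 0)"
      by (simp add:)
  qed
  also have "\<dots> = (if even n then f $ (n div 2) else 0)"
    by (cases "even n") (simp_all add:)
  finally show ?thesis .
qed

lemma disc_fps_nth: "disc_fps w $ n = (if even n then root_prod w $ (n div 2) else 0)"
  unfolding disc_fps_def by (rule fps_compose_X2_nth)

lemma disc_fps_0: "disc_fps w $ 0 = 1"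
  by (simp add: disc_fps_nth root_prod_def sqrt_fps_nth sqrt_coeff_0)

lemma disc_fps_square:
  "disc_fps w ^ 2 = (1 - fps_const w * fps_X ^ 2) * (1 - fps_const (cnj w) * fps_X ^ 2)"
proof -
  have "disc_fps w ^ 2 = root_prod w ^ 2 oo fps_X ^ 2"
    unfolding disc_fps_def by (rule fps_compose_power) simp
  also have "root_prod w ^ 2 = (1 - fps_const w * fps_X) * (1 - fps_const (cnj w) * fps_X)"
    unfolding root_prod_def power_mult_distrib sqrt_fps_square ..
  finally show ?thesis
    by (simp add: fps_compose_mult_distrib fps_compose_sub_distrib)
qed

lemma root_prod_sums:
  assumes "norm w = 1" shows "(\<lambda>k. root_prod w $ k) sums (of_real (cmod (1 - w)))"
proof -
  let ?S = "\<Sum>n. sqrt_fps w $ n"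
  have "(\<lambda>k. \<Sum>i\<le>k. sqrt_fps w $ i * sqrt_fps (cnj w) $ (k - i))
          sums (?S * (\<Sum>n. sqrt_fps (cnj w) $ n))"
    by (rule Cauchy_product_sums) (use summable_sqrt_fps[OF assms] summable_sqrt_fps[of "cnj w"] assms in auto)
  moreover have "(\<lambda>k. \<Sum>i\<le>k. sqrt_fps w $ i * sqrt_fps (cnj w) $ (k - i)) = (\<lambda>k. root_prod w $ k)"
    by (auto simp: root_prod_def fps_mult_nth atLeast0AtMost)
  moreover have "(\<Sum>n. sqrt_fps (cnj w) $ n) = cnj ?S"
  proof -
    have "(\<lambda>n. sqrt_fps w $ n) sums ?S"
      using summable_sqrt_fps[OF assms] summable_norm_cancel summable_sums by blast
    then have "(\<lambda>n. cnj (sqrt_fps w $ n)) sums cnj ?S" by (simp add: sums_cnj)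
    then show ?thesis by (simp add: sums_iff sqrt_fps_nth)
  qed
  moreover have "?S * cnj ?S = of_real (cmod (1 - w))"
  proof -
    have "?S * cnj ?S = of_real (cmod (?S ^ 2))"
      by (metis complex_norm_square norm_power of_real_power)
    then show ?thesis using sqrt_fps_sum_square[OF assms] by simp
  qed
  ultimately show ?thesis by simp
qed

section \<open>Generating functions of the walk with wall\<close>

locale wall_gf =
  fixes a b :: real and e :: complex and D :: "complex fps"
  assumes coin_unitary: "a^2 + b^2 = 1" and a_nonzero: "a \<noteq> 0"
    and D_0: "D $ 0 = 1"
    and D_square: "D ^ 2 = (1 + fps_X ^ 2) ^ 2 - 4 * fps_const (of_real a) ^ 2 * fps_X ^ 2"
begin

abbreviation "A \<equiv> fps_const (complex_of_real a)"
abbreviation "B \<equiv> fps_const (complex_of_real b)"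
abbreviation "E \<equiv> fps_const e"
abbreviation "X \<equiv> (fps_X :: complex fps)"

lemma coin_unitary_fps: "A * A + B * B = 1"
proof -
  have "complex_of_real a * complex_of_real a + complex_of_real b * complex_of_real b = 1"
    using coin_unitary by (simp add: power2_eq_square flip: of_real_mult of_real_add)
  moreover have "A * A + B * B = fps_const (complex_of_real a * complex_of_real a + complex_of_real b * complex_of_real b)"
    by (simp only: fps_const_mult fps_const_add)
  ultimately show ?thesis by simp
qed

lemma A_times_X_nonzero: "4 * A * X \<noteq> 0"
proof
  assume "4 * A * X = 0"
  then have "(4 * A * X) $ 1 = 0" by simp
  moreover have "(4 * A * X) $ 1 = 4 * complex_of_real a"
    by (simp only: fps_numeral_fps_const fps_const_mult mult.assoc[symmetric]) simp
  ultimately show False using a_nonzero by simp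
qed

text \<open>zeta = (1 + X^2 - D) / (2 a X), the power-series root of the transfer equation.\<close>
definition zeta :: "complex fps" where
  "zeta = fps_const (1 / (2 * complex_of_real a)) * fps_shift 1 (1 + X ^ 2 - D)"

lemma zeta_eq: "2 * A * X * zeta = 1 + X ^ 2 - D"
proof -
  have shift: "X * fps_shift 1 (1 + X ^ 2 - D) = 1 + X ^ 2 - D"
    by (rule fps_ext) (auto simp: D_0)
  have "2 * A * fps_const (1 / (2 * complex_of_real a)) = fps_const (2 * complex_of_real a * (1 / (2 * complex_of_real a)))"
    by (simp only: fps_numeral_fps_const fps_const_mult)
  also have "\<dots> = 1" using a_nonzero by simp
  finally have two_A: "2 * A * fps_const (1 / (2 * complex_of_real a)) = 1" .
  have "2 * A * X * zeta
        = (2 * A * fps_const (1 / (2 * complex_of_real a))) * (X * fps_shift 1 (1 + X ^ 2 - D))"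
    unfolding zeta_def by (simp only: mult_ac)
  then show ?thesis by (simp only: two_A shift mult_1_left)
qed

lemma zeta_quadratic: "A * X * zeta ^ 2 - (1 + X ^ 2) * zeta + A * X = 0"
proof -
  have "4 * A * X * (A * X * zeta ^ 2 - (1 + X ^ 2) * zeta + A * X)
        = (2 * A * X * zeta) ^ 2 - 2 * (1 + X^2) * (2 * A * X * zeta) + 4 * A ^ 2 * X ^ 2"
    by algebra
  also have "\<dots> = D ^ 2 - ((1 + X ^ 2) ^ 2 - 4 * A ^ 2 * X ^ 2)"
    unfolding zeta_eq by algebra
  also have "\<dots> = 0" using D_square by simp
  finally show ?thesis using A_times_X_nonzero by simp
qed

text \<open>G_0 = N / Den is the generating function at the origin, G_R = e X G_0 the one at (1,R)
  and G_L = -b X zeta G_R / N the one at (1,L).\<close>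
definition "N = 1 - A * X * zeta"
definition "Den = N + E * B * X ^ 2"
definition "G0 = N * inverse Den"
definition "GR = E * X * G0"
definition "GL = - (B * X * zeta * GR) * inverse N"

lemma N_inverse: "N * inverse N = 1"
  by (rule inverse_mult_eq_1') (simp add: N_def)

lemma Den_inverse: "Den * inverse Den = 1"
  by (rule inverse_mult_eq_1') (simp add: Den_def N_def power2_eq_square)

lemma N_closed_form: "2 * N = 1 - X ^ 2 + D"
  using zeta_eq unfolding N_def by (simp add: algebra_simps)

lemma GL_times_N: "GL * N = - (B * X * zeta * GR)"
  using N_inverse unfolding GL_def by algebra

lemma GL_rec: "GL = X * zeta * (A * GL - B * GR)"
proof -
  have "GL = GL * N + GL * (A * X * zeta)"
    by (simp add: N_def algebra_simps)
  then show ?thesis using GL_times_N by (simp add: algebra_simps)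
qed

lemma GR_rec: "GR * zeta = X * (B * GL + A * GR)"
proof -
  have "GR * zeta * N - X * (B * GL + A * GR) * N
      = GR * (zeta - A * X - A * X * zeta ^ 2 + (A * A + B * B) * X ^ 2 * zeta)"
    using GL_times_N unfolding N_def by algebra
  also have "\<dots> = - GR * (A * X * zeta ^ 2 - (1 + X ^ 2) * zeta + A * X)"
    unfolding coin_unitary_fps by (simp add: algebra_simps)
  also have "\<dots> = 0" by (simp add: zeta_quadratic)
  finally have "(GR * zeta - X * (B * GL + A * GR)) * N = 0"
    by (simp add: algebra_simps)
  then have "(GR * zeta - X * (B * GL + A * GR)) * N * inverse N = 0" by simp
  then show ?thesis using N_inverse by (simp add: mult.assoc)
qed

lemma G0_rec: "G0 = 1 + X * (A * GL - B * GR)"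
proof -
  have "A * GL - B * GR = - B * GR * inverse N * (A * X * zeta + N)"
    using N_inverse unfolding GL_def by algebra
  then have "A * GL - B * GR = - B * GR * inverse N"
    by (simp add: N_def)
  then have "1 + X * (A * GL - B * GR) = 1 - E * B * X ^ 2 * (N * inverse N) * inverse Den"
    unfolding GR_def G0_def by algebra
  also have "\<dots> = (Den - E * B * X ^ 2) * inverse Den"
    using N_inverse Den_inverse by algebra
  also have "\<dots> = G0" by (simp add: Den_def G0_def)
  finally show ?thesis by simp
qed

definition amp :: "nat \<Rightarrow> chir \<Rightarrow> complex fps" where
  "amp x c = (case c of L \<Rightarrow> if x = 0 then G0 else GL * zeta ^ (x - 1)
                     | R \<Rightarrow> if x = 0 then 0 else GR * zeta ^ (x - 1))"

lemma amp_initial: "amp x c $ 0 = (if x = 0 \<and> c = L then 1 else 0)"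
  by (cases c) (auto simp: amp_def G0_def GL_def GR_def N_def Den_def fps_inverse_def)

lemma amp_L_rec:
  "amp x L = (if x = 0 then 1 else 0) + X * (A * amp (Suc x) L - B * amp (Suc x) R)"
proof (cases x)
  case 0 then show ?thesis using G0_rec by (simp add: amp_def)
next
  case (Suc y)
  have "GL * zeta ^ y = (X * zeta * (A * GL - B * GR)) * zeta ^ y"
    using GL_rec by (rule arg_cong)
  then show ?thesis using Suc by (simp add: amp_def algebra_simps)
qed

lemma amp_R_wall: "amp 1 R = X * (E * amp 0 L)"
  by (simp add: amp_def GR_def mult_ac)

lemma amp_R_rec:
  assumes "x \<ge> 1" shows "amp (Suc x) R = X * (B * amp x L + A * amp x R)"
proof -
  obtain y where x: "x = Suc y" using assms by (cases x) auto
  have "GR * zeta ^ Suc y = (GR * zeta) * zeta ^ y" by (simp add: mult_ac)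
  also have "\<dots> = X * (B * (GL * zeta ^ y) + A * (GR * zeta ^ y))"
    unfolding GR_rec by (simp add: algebra_simps)
  finally show ?thesis using x by (simp add: amp_def)
qed

lemma G0_relation:
  assumes "e = 1 \<or> e = -1"
  shows "fps_const (2 - 2 * e * of_real b) * G0 * (1 - X ^ 2)
         = fps_const (1 - 2 * e * of_real b) - X ^ 2 + D"
proof -
  have "e * e = 1" using assms by auto
  then have E_square: "E * E = 1"
    by (metis fps_const_1_eq_1 fps_const_mult)
  have k: "fps_const (2 - 2 * e * of_real b) = 2 - 2 * E * B"
    and s: "fps_const (1 - 2 * e * of_real b) = 1 - 2 * E * B"
    by (rule fps_ext, simp add: fps_numeral_nth)+
  have "2 * ((1 - 2 * E * B - X ^ 2 + D) * Den) = 2 * (N * ((1 - X ^ 2) * (2 - 2 * E * B)))"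
    unfolding Den_def using N_closed_form D_square coin_unitary_fps E_square by algebra
  then have key: "(1 - 2 * E * B - X ^ 2 + D) * Den = N * ((1 - X ^ 2) * (2 - 2 * E * B))"
    by simp
  have "(2 - 2 * E * B) * G0 * (1 - X ^ 2) = inverse Den * (N * ((1 - X ^ 2) * (2 - 2 * E * B)))"
    unfolding G0_def by (simp add: mult_ac)
  also have "\<dots> = 1 - 2 * E * B - X ^ 2 + D"
    unfolding key[symmetric] using Den_inverse by (simp add: mult_ac)
  finally show ?thesis unfolding k s .
qed

end

section \<open>Coefficients of a series divided by 1 - X^2\<close>

lemma fps_parity_partial_sums:
  fixes F G :: "'a::comm_ring_1 fps"
  assumes "F * (1 - fps_X ^ 2) = G"
  shows "F $ (2 * m) = (\<Sum>j\<le>m. G $ (2 * j))"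
    and "F $ (2 * m + 1) = (\<Sum>j\<le>m. G $ (2 * j + 1))"
proof -
  have coeff: "G $ n = F $ n - (if n < 2 then 0 else F $ (n - 2))" for n
    unfolding assms[symmetric] by (simp add: algebra_simps fps_X_power_mult_right_nth)
  show "F $ (2 * m) = (\<Sum>j\<le>m. G $ (2 * j))"
  proof (induction m)
    case (Suc m) then show ?case using coeff[of "2 * m + 2"] by simp
  qed (simp add: coeff[of 0])
  show "F $ (2 * m + 1) = (\<Sum>j\<le>m. G $ (2 * j + 1))"
  proof (induction m)
    case (Suc m) then show ?case using coeff[of "Suc (Suc (Suc (2 * m)))"] by simp
  qed (simp add: coeff[of "Suc 0"])
qed

lemma coin_props:
  assumes "\<kappa> \<ge> 3"
  shows "(a_k \<kappa>)^2 + (b_k \<kappa>)^2 = 1" "a_k \<kappa> > 0" "b_k \<kappa> > 0" "b_k \<kappa> < 1"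
proof -
  have k: "real \<kappa> \<ge> 3" using assms by simp
  have s: "sqrt (real \<kappa> - 1) ^ 2 = real \<kappa> - 1" using k by simp
  show "(a_k \<kappa>)^2 + (b_k \<kappa>)^2 = 1"
    unfolding a_k_def b_k_def using k s by (simp add: field_simps power2_eq_square)
  show "a_k \<kappa> > 0" "b_k \<kappa> > 0" "b_k \<kappa> < 1"
    unfolding a_k_def b_k_def using k by (simp_all add: field_simps)
qed

text \<open>w = (a + i b)^2 lies on the unit circle, with w + cnj w = 2(a^2 - b^2) = 4a^2 - 2 and |1 - w| = 2b;
  this is the point at which the discriminant factors.\<close>
definition coin_phase :: "nat \<Rightarrow> complex" where
  "coin_phase \<kappa> = (complex_of_real (a_k \<kappa>) + \<i> * complex_of_real (b_k \<kappa>)) ^ 2"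

lemma coin_phase_props:
  assumes "\<kappa> \<ge> 3"
  shows "norm (coin_phase \<kappa>) = 1"
    and "coin_phase \<kappa> + cnj (coin_phase \<kappa>) = complex_of_real (4 * (a_k \<kappa>)^2 - 2)"
    and "coin_phase \<kappa> * cnj (coin_phase \<kappa>) = 1"
    and "cmod (1 - coin_phase \<kappa>) = 2 * b_k \<kappa>"
proof -
  define a b where "a = a_k \<kappa>" and "b = b_k \<kappa>"
  have ab: "a^2 + b^2 = 1" and b_pos: "b > 0"
    using coin_props[OF assms] by (auto simp: a_def b_def)
  have w: "coin_phase \<kappa> = Complex (a^2 - b^2) (2*a*b)"
    unfolding coin_phase_def a_def[symmetric] b_def[symmetric]
    by (simp add: complex_eq_iff power2_eq_square)
  have "norm (coin_phase \<kappa>) ^ 2 = (a^2 + b^2)^2"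
    unfolding w cmod_power2 by (simp add: power2_eq_square algebra_simps)
  then have norm_sq: "norm (coin_phase \<kappa>) ^ 2 = 1" using ab by simp
  then show "norm (coin_phase \<kappa>) = 1"
    using norm_ge_zero[of "coin_phase \<kappa>"] by (auto simp: power2_eq_1_iff)
  show "coin_phase \<kappa> + cnj (coin_phase \<kappa>) = complex_of_real (4 * (a_k \<kappa>)^2 - 2)"
    using ab unfolding w by (simp add: complex_eq_iff a_def b_def)
  show "coin_phase \<kappa> * cnj (coin_phase \<kappa>) = 1"
    using norm_sq by (metis complex_norm_square of_real_1)
  have "cmod (1 - coin_phase \<kappa>) ^ 2 = (2 * b) ^ 2 * (a^2 + b^2)"
    unfolding w cmod_power2 using ab by simp algebra
  then show "cmod (1 - coin_phase \<kappa>) = 2 * b_k \<kappa>"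
    using ab b_pos power2_eq_iff_nonneg[of "cmod (1 - coin_phase \<kappa>)" "2*b"] by (simp add: b_def)
qed

lemma disc_fps_coin_square:
  assumes "\<kappa> \<ge> 3"
  shows "disc_fps (coin_phase \<kappa>) ^ 2
         = (1 + fps_X ^ 2) ^ 2 - 4 * fps_const (complex_of_real (a_k \<kappa>)) ^ 2 * fps_X ^ 2"
proof -
  have "fps_const (coin_phase \<kappa>) + fps_const (cnj (coin_phase \<kappa>))
        = 4 * fps_const (complex_of_real (a_k \<kappa>)) ^ 2 - 2"
    using coin_phase_props(2)[OF assms] by (simp add: fps_numeral_fps_const)
  moreover have "fps_const (coin_phase \<kappa>) * fps_const (cnj (coin_phase \<kappa>)) = 1"
    using coin_phase_props(3)[OF assms] by simp
  ultimately show ?thesis unfolding disc_fps_square by algebra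
qed

text \<open>The decay rate r = (1 - b)/a of the limiting amplitudes away from the wall;
  r^2 = 1/(kappa - 1).\<close>
definition decay :: "nat \<Rightarrow> real" where
  "decay \<kappa> = (1 - b_k \<kappa>) / a_k \<kappa>"

lemma decay_square:
  assumes "\<kappa> \<ge> 3" shows "decay \<kappa> ^ 2 = 1 / (real \<kappa> - 1)"
proof -
  have k: "real \<kappa> \<ge> 3" using assms by simp
  have s: "sqrt (real \<kappa> - 1) ^ 2 = real \<kappa> - 1" using k by simp
  have "decay \<kappa> ^ 2 = (2 / real \<kappa>) ^ 2 / (2 * sqrt (real \<kappa> - 1) / real \<kappa>) ^ 2"
    unfolding decay_def a_k_def b_k_def by (simp add: power_divide)
  also have "\<dots> = 1 / (real \<kappa> - 1)"
    unfolding power_divide power_mult_distrib s using k by (simp add: field_simps)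
  finally show ?thesis .
qed

lemma origin_limit_value:
  fixes e :: complex
  assumes "\<kappa> \<ge> 3" and cases: "e = 1 \<and> \<Lambda> = 0 \<or> e = -1 \<and> \<Lambda> = (real \<kappa> - 2) / (real \<kappa> - 1)"
  defines "b \<equiv> complex_of_real (b_k \<kappa>)"
  shows "2 - 2 * e * b \<noteq> 0" and "(2 * b - 2 * e * b) / (2 - 2 * e * b) = of_real \<Lambda>"
proof -
  show "2 - 2 * e * b \<noteq> 0"
    using cases coin_props[OF assms(1)] by (auto simp: b_def complex_eq_iff)
  show "(2 * b - 2 * e * b) / (2 - 2 * e * b) = of_real \<Lambda>"
  proof (cases "e = 1")
    case True then show ?thesis using cases by simp
  next
    case False
    then have "e = -1" "\<Lambda> = (real \<kappa> - 2) / (real \<kappa> - 1)" using cases by auto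
    moreover have "4 * b_k \<kappa> / (2 + 2 * b_k \<kappa>) = (real \<kappa> - 2) / (real \<kappa> - 1)"
      using assms(1) by (simp add: b_k_def field_simps)
    moreover have "(2 * b - 2 * e * b) / (2 - 2 * e * b) = of_real (4 * b_k \<kappa> / (2 + 2 * b_k \<kappa>))"
      using \<open>e = -1\<close> by (simp add: b_def)
    ultimately show ?thesis by simp
  qed
qed

section \<open>Propagation of limits along the light cone\<close>

text \<open>With r = (1 - b)/a, one step towards the bulk multiplies the L-amplitude by
  (1 - b)/a = r and the R-amplitude by b r - a = -r.\<close>
lemma decay_identities:
  fixes a b r :: real
  assumes "a^2 + b^2 = 1" and "a \<noteq> 0" and r: "r * a = 1 - b"
  shows "(1 - of_real b) / of_real a = (of_real r :: complex)"
    and "of_real b * of_real r - of_real a = - (of_real r :: complex)"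
proof -
  have "r = (1 - b) / a" using r assms(2) by (simp add: field_simps)
  then show "(1 - of_real b) / of_real a = (of_real r :: complex)" by simp
  have "r * (1 + b) * a = (r * a) * (1 + b)" by simp
  also have "\<dots> = 1 - b^2" unfolding r by (simp add: power2_eq_square algebra_simps)
  also have "\<dots> = a * a" using assms(1) by (simp add: power2_eq_square)
  finally have "r * (1 + b) = a" using assms(2) by simp
  then have "b * r - a = - r" by (simp add: algebra_simps)
  then have "complex_of_real (b * r - a) = complex_of_real (- r)" by (rule arg_cong)
  then show "of_real b * of_real r - of_real a = - (of_real r :: complex)" by simp
qed

locale wall_recursion =
  fixes \<psi> :: "nat \<Rightarrow> nat \<Rightarrow> chir \<Rightarrow> complex" and a b :: real and e :: complex
  assumes step_wall: "\<And>t. \<psi> (Suc t) 1 R = e * \<psi> t 0 L"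
    and step_R: "\<And>t x. x \<ge> 1 \<Longrightarrow> \<psi> (Suc t) (Suc x) R = of_real b * \<psi> t x L + of_real a * \<psi> t x R"
    and step_L: "\<And>t x. \<psi> (Suc t) x L = of_real a * \<psi> t (Suc x) L - of_real b * \<psi> t (Suc x) R"
    and a_nonzero: "a \<noteq> 0"
begin

text \<open>Each recursion transports limits along any sequence of times f t; the L-recursion is
  solved for the amplitude at the site further from the wall.\<close>
lemma tendsto_L_outward:
  assumes "(\<lambda>t. \<psi> (Suc (f t)) x L) \<longlonglongrightarrow> l" and "(\<lambda>t. \<psi> (f t) (Suc x) R) \<longlonglongrightarrow> r"
  shows "(\<lambda>t. \<psi> (f t) (Suc x) L) \<longlonglongrightarrow> (l + of_real b * r) / of_real a"
proof -
  have "\<psi> (f t) (Suc x) L = (\<psi> (Suc (f t)) x L + of_real b * \<psi> (f t) (Suc x) R) / of_real a" for t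
    using step_L[of "f t" x] a_nonzero by (simp add: field_simps)
  then show ?thesis using assms a_nonzero by (simp only:) (intro tendsto_intros, auto)
qed

lemma tendsto_R_bulk:
  assumes "x \<ge> 1" and "(\<lambda>t. \<psi> (f t) x L) \<longlonglongrightarrow> l" and "(\<lambda>t. \<psi> (f t) x R) \<longlonglongrightarrow> r"
  shows "(\<lambda>t. \<psi> (Suc (f t)) (Suc x) R) \<longlonglongrightarrow> of_real b * l + of_real a * r"
  using assms by (simp only: step_R) (intro tendsto_intros)

lemma tendsto_R_wall:
  assumes "(\<lambda>t. \<psi> (f t) 0 L) \<longlonglongrightarrow> l"
  shows "(\<lambda>t. \<psi> (Suc (f t)) 1 R) \<longlonglongrightarrow> e * l"
  using assms by (simp only: step_wall) (intro tendsto_intros)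

lemma light_cone_limits:
  assumes coin_unitary: "a^2 + b^2 = 1" and r: "r * a = 1 - b" and reflect: "e * \<Lambda> = - \<Lambda>"
    and origin_even: "(\<lambda>t. \<psi> (2 * t) 0 L) \<longlonglongrightarrow> \<Lambda>"
    and origin_odd: "(\<lambda>t. \<psi> (2 * t + 1) 0 L) \<longlonglongrightarrow> 0"
  shows "(\<lambda>t. \<psi> (2 * t + x) x L) \<longlonglongrightarrow> \<Lambda> * of_real r ^ x
       \<and> (\<lambda>t. \<psi> (2 * t + x + 1) x L) \<longlonglongrightarrow> 0
       \<and> (\<lambda>t. \<psi> (2 * t + x + 1) (Suc x) R) \<longlonglongrightarrow> - \<Lambda> * of_real r ^ x
       \<and> (\<lambda>t. \<psi> (2 * t + x + 2) (Suc x) R) \<longlonglongrightarrow> 0"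
proof (induction x)
  case 0
  have "(\<lambda>t. \<psi> (Suc (2 * t)) 1 R) \<longlonglongrightarrow> e * \<Lambda>"
    and "(\<lambda>t. \<psi> (Suc (2 * t + 1)) 1 R) \<longlonglongrightarrow> e * 0"
    by (rule tendsto_R_wall, rule origin_even) (rule tendsto_R_wall, rule origin_odd)
  then show ?case using origin_even origin_odd reflect by simp
next
  case (Suc x)
  note r_outward = decay_identities(1)[OF coin_unitary a_nonzero r]
    and r_inward = decay_identities(2)[OF coin_unitary a_nonzero r]
  have shift_even: "(\<lambda>t. \<psi> (Suc (2 * t + Suc x)) x L) \<longlonglongrightarrow> \<Lambda> * of_real r ^ x"
    and shift_odd: "(\<lambda>t. \<psi> (Suc (2 * t + Suc x + 1)) x L) \<longlonglongrightarrow> 0"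
    using Suc.IH LIMSEQ_Suc[of "\<lambda>t. \<psi> (2 * t + x) x L"] LIMSEQ_Suc[of "\<lambda>t. \<psi> (2 * t + x + 1) x L"]
    by (simp_all add: algebra_simps)
  have L_even: "(\<lambda>t. \<psi> (2 * t + Suc x) (Suc x) L) \<longlonglongrightarrow> \<Lambda> * of_real r ^ Suc x"
  proof -
    have "(\<lambda>t. \<psi> (2 * t + Suc x) (Suc x) L)
          \<longlonglongrightarrow> (\<Lambda> * of_real r ^ x + of_real b * (- \<Lambda> * of_real r ^ x)) / of_real a"
      using Suc.IH shift_even by (intro tendsto_L_outward) simp_all
    also have "(\<Lambda> * of_real r ^ x + of_real b * (- \<Lambda> * of_real r ^ x)) / of_real a
               = \<Lambda> * of_real r ^ x * ((1 - of_real b) / of_real a)"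
      by (simp add: algebra_simps diff_divide_distrib)
    finally show ?thesis unfolding r_outward by (simp add: mult_ac)
  qed
  have L_odd: "(\<lambda>t. \<psi> (2 * t + Suc x + 1) (Suc x) L) \<longlonglongrightarrow> 0"
    using tendsto_L_outward[OF shift_odd, of 0] Suc.IH by simp
  have R_even: "(\<lambda>t. \<psi> (2 * t + Suc x + 1) (Suc (Suc x)) R) \<longlonglongrightarrow> - \<Lambda> * of_real r ^ Suc x"
  proof -
    have "(\<lambda>t. \<psi> (Suc (2 * t + Suc x)) (Suc (Suc x)) R)
          \<longlonglongrightarrow> of_real b * (\<Lambda> * of_real r ^ Suc x) + of_real a * (- \<Lambda> * of_real r ^ x)"
      using L_even Suc.IH by (intro tendsto_R_bulk) simp_all
    also have "of_real b * (\<Lambda> * of_real r ^ Suc x) + of_real a * (- \<Lambda> * of_real r ^ x)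
               = \<Lambda> * of_real r ^ x * (of_real b * of_real r - of_real a)"
      by (simp add: algebra_simps)
    finally show ?thesis unfolding r_inward by (simp add: mult_ac)
  qed
  have R_odd: "(\<lambda>t. \<psi> (2 * t + Suc x + 2) (Suc (Suc x)) R) \<longlonglongrightarrow> 0"
    using tendsto_R_bulk[of "Suc x" "\<lambda>t. 2 * t + Suc x + 1" 0 0] L_odd Suc.IH by simp
  show ?case using L_even L_odd R_even R_odd by simp
qed

end

lemma parity_limits:
  fixes p :: "nat \<Rightarrow> 'a::{topological_space, zero}"
  assumes on_cone: "(\<lambda>t. p (2 * t + x)) \<longlonglongrightarrow> v" and off_cone: "(\<lambda>t. p (2 * t + x + 1)) \<longlonglongrightarrow> 0"
  shows "(\<lambda>t. p (2 * t)) \<longlonglongrightarrow> (if even x then v else 0)"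
    and "(\<lambda>t. p (2 * t + 1)) \<longlonglongrightarrow> (if odd x then v else 0)"
proof -
  consider m where "x = 2 * m" | m where "x = 2 * m + 1" by (metis oddE evenE)
  then have "(\<lambda>t. p (2 * t)) \<longlonglongrightarrow> (if even x then v else 0)
           \<and> (\<lambda>t. p (2 * t + 1)) \<longlonglongrightarrow> (if odd x then v else 0)"
  proof cases
    case 1
    have "(\<lambda>t. p (2 * t)) \<longlonglongrightarrow> v"
      by (rule LIMSEQ_offset[where k = m]) (use on_cone in \<open>simp add: 1 algebra_simps\<close>)
    moreover have "(\<lambda>t. p (2 * t + 1)) \<longlonglongrightarrow> 0"
      by (rule LIMSEQ_offset[where k = m]) (use off_cone in \<open>simp add: 1 algebra_simps\<close>)
    ultimately show ?thesis using 1 by simp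
  next
    case 2
    have "(\<lambda>t. p (2 * t)) \<longlonglongrightarrow> 0"
      by (rule LIMSEQ_offset[where k = "Suc m"]) (use off_cone in \<open>simp add: 2 algebra_simps\<close>)
    moreover have "(\<lambda>t. p (2 * t + 1)) \<longlonglongrightarrow> v"
      by (rule LIMSEQ_offset[where k = m]) (use on_cone in \<open>simp add: 2 algebra_simps\<close>)
    ultimately show ?thesis using 2 by simp
  qed
  then show "(\<lambda>t. p (2 * t)) \<longlonglongrightarrow> (if even x then v else 0)"
    and "(\<lambda>t. p (2 * t + 1)) \<longlonglongrightarrow> (if odd x then v else 0)" by auto
qed

lemma cmod_scaled_power_square:
  fixes c r :: real
  shows "(cmod (of_real c * of_real r ^ n))^2 = c^2 * (r^2)^n"
proof -
  have swap: "(y ^ n) ^ 2 = (y ^ 2) ^ n" for y :: real by (metis power_mult mult.commute)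
  have "cmod (of_real c * of_real r ^ n) = \<bar>c\<bar> * \<bar>r\<bar> ^ n" by (simp add: norm_mult norm_power)
  then show ?thesis by (simp only: power_mult_distrib swap power2_abs)
qed

context
  fixes \<kappa> :: nat and \<gamma> :: real
  assumes kappa_ge_3: "\<kappa> \<ge> 3"
begin

interpretation W: wall_gf "a_k \<kappa>" "b_k \<kappa>" "cis \<gamma>" "disc_fps (coin_phase \<kappa>)"
proof
  show "(a_k \<kappa>)\<^sup>2 + (b_k \<kappa>)\<^sup>2 = 1" "a_k \<kappa> \<noteq> 0" using coin_props[OF kappa_ge_3] by auto
qed (simp_all add: disc_fps_0 disc_fps_coin_square[OF kappa_ge_3])

lemma Phi_coeff: "Phi \<gamma> \<kappa> t x c = W.amp x c $ t"
proof (induction t arbitrary: x c)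
  case 0 show ?case by (simp add: Phi_def W.amp_initial)
next
  case (Suc t)
  have step: "Phi \<gamma> \<kappa> (Suc t) x c = wstep \<gamma> \<kappa> (Phi \<gamma> \<kappa> t) x c"
    by (simp add: Phi_def)
  show ?case
  proof (cases c)
    case L
    have "W.amp x L $ Suc t = a_k \<kappa> * W.amp (Suc x) L $ t - b_k \<kappa> * W.amp (Suc x) R $ t"
      by (subst W.amp_L_rec) (simp add: algebra_simps)
    then show ?thesis using L step Suc.IH by (simp add: wstep_def)
  next
    case R
    consider "x = 0" | "x = 1" | y where "x = Suc y" "y \<ge> 1"
      by (metis One_nat_def less_one not_less not0_implies_Suc)
    then show ?thesis
    proof cases
      case 1 then show ?thesis using R step by (simp add: wstep_def W.amp_def)
    next
      case 2 then show ?thesis using R step Suc.IH W.amp_R_wall by (simp add: wstep_def)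
    next
      case 3 then show ?thesis using R step Suc.IH
        by (simp add: wstep_def W.amp_R_rec[OF \<open>y \<ge> 1\<close>])
    qed
  qed
qed

text \<open>By G0_relation and fps_parity_partial_sums, (2 - 2eb) Phi_2m(0,L) equals 1 - 2eb - [m \<ge> 1]
  plus the m-th partial sum of the coefficients of root_prod, which tends to 2b.\<close>
lemma origin_limits:
  assumes cases: "cis \<gamma> = 1 \<and> \<Lambda> = 0 \<or> cis \<gamma> = -1 \<and> \<Lambda> = (real \<kappa> - 2) / (real \<kappa> - 1)"
  shows "(\<lambda>m. Phi \<gamma> \<kappa> (2 * m) 0 L) \<longlonglongrightarrow> of_real \<Lambda>"
    and "Phi \<gamma> \<kappa> (2 * m + 1) 0 L = 0"
proof -
  define e b where "e = cis \<gamma>" and "b = complex_of_real (b_k \<kappa>)"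
  define k s where "k = 2 - 2 * e * b" and "s = 1 - 2 * e * b"
  define d where "d = (\<lambda>j. root_prod (coin_phase \<kappa>) $ j)"
  have rel: "(fps_const k * W.G0) * (1 - fps_X ^ 2) = fps_const s - fps_X ^ 2 + disc_fps (coin_phase \<kappa>)"
    using W.G0_relation cases unfolding k_def s_def e_def b_def by (auto simp: mult.assoc)
  have e_cases: "e = 1 \<and> \<Lambda> = 0 \<or> e = -1 \<and> \<Lambda> = (real \<kappa> - 2) / (real \<kappa> - 1)"
    using cases by (simp add: e_def)
  note origin_value = origin_limit_value[OF kappa_ge_3 e_cases, folded b_def]
  have k_nonzero: "k \<noteq> 0" using origin_value(1) by (simp add: k_def)
  have "s - 1 + 2 * b = 2 * b - 2 * e * b" by (simp add: s_def)
  then have limit_value: "(s - 1 + 2 * b) / k = of_real \<Lambda>"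
    using origin_value(2) by (simp add: k_def)
  have even_coeff: "k * Phi \<gamma> \<kappa> (2 * m) 0 L = s - (if m = 0 then 0 else 1) + (\<Sum>j\<le>m. d j)" for m
  proof -
    have "k * Phi \<gamma> \<kappa> (2 * m) 0 L = (\<Sum>j\<le>m. (if j = 0 then s else 0) - (if j = 1 then 1 else 0) + d j)"
      using fps_parity_partial_sums(1)[OF rel, of m]
      by (simp add: Phi_coeff W.amp_def disc_fps_nth d_def mult_2[symmetric])
    then show ?thesis by (simp add: sum.distrib sum_subtractf)
  qed
  show "Phi \<gamma> \<kappa> (2 * m + 1) 0 L = 0"
    using fps_parity_partial_sums(2)[OF rel, of m] k_nonzero
    by (simp add: Phi_coeff W.amp_def disc_fps_nth)
  have "d sums of_real (2 * b_k \<kappa>)"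
    using root_prod_sums[OF coin_phase_props(1)[OF kappa_ge_3]] coin_phase_props(4)[OF kappa_ge_3]
    by (simp add: d_def)
  then have "(\<lambda>m. \<Sum>j\<le>Suc m. d j) \<longlonglongrightarrow> 2 * b"
    unfolding sums_def lessThan_Suc_atMost[symmetric] b_def by (intro LIMSEQ_Suc) simp
  then have "(\<lambda>m. (s - 1 + (\<Sum>j\<le>Suc m. d j)) / k) \<longlonglongrightarrow> (s - 1 + 2 * b) / k"
    using k_nonzero by (intro tendsto_intros)
  moreover have "(\<lambda>m. Phi \<gamma> \<kappa> (2 * Suc m) 0 L) = (\<lambda>m. (s - 1 + (\<Sum>j\<le>Suc m. d j)) / k)"
  proof
    fix m show "Phi \<gamma> \<kappa> (2 * Suc m) 0 L = (s - 1 + (\<Sum>j\<le>Suc m. d j)) / k"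
      using even_coeff[of "Suc m"] k_nonzero by (simp add: field_simps)
  qed
  ultimately have "(\<lambda>m. Phi \<gamma> \<kappa> (2 * Suc m) 0 L) \<longlonglongrightarrow> (s - 1 + 2 * b) / k"
    by (simp only:)
  then show "(\<lambda>m. Phi \<gamma> \<kappa> (2 * m) 0 L) \<longlonglongrightarrow> of_real \<Lambda>"
    unfolding limit_value[symmetric] by (rule LIMSEQ_imp_Suc)
qed

interpretation Phi_rec: wall_recursion "Phi \<gamma> \<kappa>" "a_k \<kappa>" "b_k \<kappa>" "cis \<gamma>"
  by unfold_locales (use coin_props[OF kappa_ge_3] in \<open>simp_all add: Phi_def wstep_def\<close>)

lemma site_limits:
  assumes cases: "cis \<gamma> = 1 \<and> \<Lambda> = 0 \<or> cis \<gamma> = -1 \<and> \<Lambda> = (real \<kappa> - 2) / (real \<kappa> - 1)"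
  shows "(\<lambda>t. Pw \<gamma> \<kappa> (2 * t + x) x)
           \<longlonglongrightarrow> \<Lambda>^2 * (if x = 0 then 1 else real \<kappa> * (1 / (real \<kappa> - 1)) ^ x)"
    and "(\<lambda>t. Pw \<gamma> \<kappa> (2 * t + x + 1) x) \<longlonglongrightarrow> 0"
proof -
  define r where "r = decay \<kappa>"
  have r_a: "r * a_k \<kappa> = 1 - b_k \<kappa>"
    using coin_props[OF kappa_ge_3] by (simp add: r_def decay_def)
  have "cis \<gamma> = 1 \<and> \<Lambda> = 0 \<or> cis \<gamma> = -1" using cases by blast
  then have reflect: "cis \<gamma> * of_real \<Lambda> = - of_real \<Lambda>" by auto
  have "(\<lambda>t. Phi \<gamma> \<kappa> (2 * t + 1) 0 L) = (\<lambda>t. 0)"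
    by (rule ext) (rule origin_limits(2)[OF cases])
  then have origin_odd: "(\<lambda>t. Phi \<gamma> \<kappa> (2 * t + 1) 0 L) \<longlonglongrightarrow> 0" by simp
  note cone = Phi_rec.light_cone_limits[OF coin_props(1)[OF kappa_ge_3] r_a reflect
      origin_limits(1)[OF cases] origin_odd]
  have norm_sq: "(cmod (of_real \<Lambda> * of_real r ^ n))^2 = \<Lambda>^2 * (1 / (real \<kappa> - 1)) ^ n" for n
    using cmod_scaled_power_square[of \<Lambda> r n] decay_square[OF kappa_ge_3] by (simp add: r_def)
  show "(\<lambda>t. Pw \<gamma> \<kappa> (2 * t + x) x)
          \<longlonglongrightarrow> \<Lambda>^2 * (if x = 0 then 1 else real \<kappa> * (1 / (real \<kappa> - 1)) ^ x)"
  proof (cases x)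
    case 0
    have "(\<lambda>t. (cmod (Phi \<gamma> \<kappa> (2 * t) 0 L))^2) \<longlonglongrightarrow> (cmod (of_real \<Lambda> * of_real r ^ 0))^2"
      using cone[of 0] by (intro tendsto_intros) simp
    then show ?thesis using 0 norm_sq[of 0] by (simp add: Pw_def)
  next
    case (Suc y)
    have "(\<lambda>t. (cmod (Phi \<gamma> \<kappa> (2 * t + x) x L))^2 + (cmod (Phi \<gamma> \<kappa> (2 * t + y + 1) (Suc y) R))^2)
          \<longlonglongrightarrow> (cmod (of_real \<Lambda> * of_real r ^ x))^2 + (cmod (- of_real \<Lambda> * of_real r ^ y))^2"
      using cone[of x] cone[of y] by (intro tendsto_intros) auto
    moreover have "\<Lambda>^2 * (1 / (real \<kappa> - 1)) ^ x + \<Lambda>^2 * (1 / (real \<kappa> - 1)) ^ y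
                   = \<Lambda>^2 * (real \<kappa> * (1 / (real \<kappa> - 1)) ^ x)"
      using kappa_ge_3 by (simp add: Suc field_simps)
    ultimately show ?thesis using norm_sq[of x] norm_sq[of y] by (simp add: Suc Pw_def)
  qed
  show "(\<lambda>t. Pw \<gamma> \<kappa> (2 * t + x + 1) x) \<longlonglongrightarrow> 0"
  proof (cases x)
    case 0
    have "(\<lambda>t. (cmod (Phi \<gamma> \<kappa> (2 * t + x + 1) x L))^2) \<longlonglongrightarrow> (cmod 0)^2"
      using cone[of x] by (intro tendsto_intros) auto
    then show ?thesis by (simp add: 0 Pw_def)
  next
    case (Suc y)
    have "(\<lambda>t. (cmod (Phi \<gamma> \<kappa> (2 * t + x + 1) x L))^2 + (cmod (Phi \<gamma> \<kappa> (2 * t + y + 2) (Suc y) R))^2)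
          \<longlonglongrightarrow> (cmod 0)^2 + (cmod 0)^2"
      using cone[of x] cone[of y] by (intro tendsto_intros) auto
    then show ?thesis by (simp add: Suc Pw_def)
  qed
qed

lemma limit_distribution:
  fixes x :: nat
  assumes "cis \<gamma> = 1 \<and> \<Lambda> = 0 \<or> cis \<gamma> = -1 \<and> \<Lambda> = (real \<kappa> - 2) / (real \<kappa> - 1)"
  defines "V \<equiv> \<Lambda>^2 * (if x = 0 then 1 else real \<kappa> * (1 / (real \<kappa> - 1)) ^ x)"
  shows "(\<lambda>t. Pw \<gamma> \<kappa> (2 * t) x) \<longlonglongrightarrow> (if even x then V else 0)"
    and "(\<lambda>t. Pw \<gamma> \<kappa> (2 * t + 1) x) \<longlonglongrightarrow> (if odd x then V else 0)"
  using parity_limits[where p = "\<lambda>t. Pw \<gamma> \<kappa> t x", OF site_limits[OF assms(1)]]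
  unfolding V_def by auto

end

theorem theorem1:
  fixes \<kappa> :: nat
  assumes "\<kappa> \<ge> 3"
  shows "(\<forall>x. (\<lambda>t. Pw 0 \<kappa> (2 * t) x) \<longlonglongrightarrow> 0 \<and> (\<lambda>t. Pw 0 \<kappa> (2 * t + 1) x) \<longlonglongrightarrow> 0)
       \<and> (\<forall>x. (\<lambda>t. Pw pi \<kappa> (2 * t) x) \<longlonglongrightarrow>
               (if even x then ((real \<kappa> - 2) / (real \<kappa> - 1))\<^sup>2 *
                   ((if x = 0 then 1 else 0) + (if x = 0 then 0 else 1) * real \<kappa> * (1 / (real \<kappa> - 1)) ^ x)
                else 0))
       \<and> (\<forall>x. (\<lambda>t. Pw pi \<kappa> (2 * t + 1) x) \<longlonglongrightarrow>
               (if odd x then real \<kappa> * ((real \<kappa> - 2) / (real \<kappa> - 1))\<^sup>2 * (1 / (real \<kappa> - 1)) ^ x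
                else 0))"
proof (intro conjI allI)
  fix x :: nat
  let ?c = "(real \<kappa> - 2) / (real \<kappa> - 1)" and ?q = "1 / (real \<kappa> - 1)"
  have "cis 0 = 1 \<and> (0::real) = 0" by simp
  note case_A = limit_distribution[OF assms disjI1[OF this], of x]
  have "cis pi = -1 \<and> ?c = ?c" by simp
  note case_B = limit_distribution[OF assms disjI2[OF this], of x]
  show "(\<lambda>t. Pw 0 \<kappa> (2 * t) x) \<longlonglongrightarrow> 0" "(\<lambda>t. Pw 0 \<kappa> (2 * t + 1) x) \<longlonglongrightarrow> 0"
    using case_A by (simp_all only: power_zero_numeral mult_zero_left if_cancel)
  have "?c\<^sup>2 * (if x = 0 then 1 else real \<kappa> * ?q ^ x)
        = ?c\<^sup>2 * ((if x = 0 then 1 else 0) + (if x = 0 then 0 else 1) * real \<kappa> * ?q ^ x)"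
    by simp
  then show "(\<lambda>t. Pw pi \<kappa> (2 * t) x) \<longlonglongrightarrow>
      (if even x then ?c\<^sup>2 * ((if x = 0 then 1 else 0) + (if x = 0 then 0 else 1) * real \<kappa> * ?q ^ x)
       else 0)"
    using case_B(1) by (simp only:)
  have "(if odd x then ?c\<^sup>2 * (if x = 0 then 1 else real \<kappa> * ?q ^ x) else 0)
        = (if odd x then real \<kappa> * ?c\<^sup>2 * ?q ^ x else 0)"
    by (cases "x = 0") simp_all
  then show "(\<lambda>t. Pw pi \<kappa> (2 * t + 1) x) \<longlonglongrightarrow> (if odd x then real \<kappa> * ?c\<^sup>2 * ?q ^ x else 0)"
    using case_B(2) by (simp only:)
qed

end
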